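(* The restricted wave cone $\Lambda'$ is dense in the wave cone $\Lambda$.
   Context: Let $n\ge2$, $\mathcal S_0^{n\times n}$ the trace-free symmetric $n\times n$ matrices, $Z:=\mathbb{R}\times\mathbb{R}^n\times\mathbb{R}^n\times\mathcal S_0^{n\times n}\times\mathbb{R}$ with elements $\bar z=(\bar\rho,\bar v,\bar m,\bar\sigma,\bar p)$. Define the $(n+2)\times(n+1)$ matrix $M_\Lambda(\bar z):=\begin{pmatrix}\bar\sigma+\bar p\,\mathrm{Id}&\bar v\\ \bar v^T&0\\ \bar m^T&\bar\rho\end{pmatrix}$, the wave cone $\Lambda:=\{\bar z\in Z:\ker M_\Lambda(\bar z)\neq\{0\},\ (\bar\rho,\bar v)\neq0\}$, and $\Lambda':=\{\bar z\in\Lambda:\ker M_\Lambda(\bar z)\cap(\mathbb{R}^n\times(\mathbb{R}\setminus\{0\}))\neq\emptyset\}$. *)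

theory Defs
  imports "HOL-Analysis.Analysis"
begin

text \<open>The space Z = R x R^n x R^n x S_0^{n x n} x R, realised inside the ambient
  Euclidean product space; the dimension n is CARD('n).\<close>

type_synonym 'n Zamb = "real \<times> (real^'n) \<times> (real^'n) \<times> (real^'n^'n) \<times> real"

definition Zset :: "'n::finite Zamb set" where
  "Zset = {(\<rho>, v, m, \<sigma>, p). transpose \<sigma> = \<sigma> \<and> (\<Sum>i\<in>UNIV. \<sigma> $ i $ i) = 0}"

text \<open>The (n+2) x (n+1) matrix M_Lambda(z) applied to a vector (x,t) in R^n x R:
  rows (sigma + p Id | v), (v^T | 0), (m^T | rho).\<close>

definition M_Lambda :: "'n::finite Zamb \<Rightarrow> (real^'n) \<times> real \<Rightarrow> (real^'n) \<times> real \<times> real" where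
  "M_Lambda z w = (case z of (\<rho>, v, m, \<sigma>, p) \<Rightarrow> case w of (x, t) \<Rightarrow>
     ((\<sigma> + p *\<^sub>R mat 1) *v x + t *\<^sub>R v, v \<bullet> x, m \<bullet> x + \<rho> * t))"

definition ker_M :: "'n::finite Zamb \<Rightarrow> ((real^'n) \<times> real) set" where
  "ker_M z = {w. M_Lambda z w = 0}"

definition wave_cone :: "'n::finite Zamb set" where
  "wave_cone = {z \<in> Zset. ker_M z \<noteq> {0} \<and> (fst z, fst (snd z)) \<noteq> 0}"

definition wave_cone' :: "'n::finite Zamb set" where
  "wave_cone' = {z \<in> wave_cone. ker_M z \<inter> (UNIV \<times> (UNIV - {0})) \<noteq> {}}"

end

theory Submission
  imports Defs
begin

text \<open>A point z = (\<rho>, v, m, \<sigma>, p) of \<Lambda> outside \<Lambda>' has a kernel vector (x, 0) with x \<noteq> 0,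
  so v \<bullet> x = 0 and m \<bullet> x = 0. The symmetric trace-free matrix
  S = -(v x^T + x v^T) / |x|^2 maps x to -v, so after adding \<epsilon> S to \<sigma> and
  -\<epsilon> \<rho> x / |x|^2 to m the vector (x, \<epsilon>) lies in the kernel. For \<epsilon> \<noteq> 0 the perturbed
  point is therefore in \<Lambda>', and it tends to z as \<epsilon> \<rightarrow> 0.\<close>

definition outer :: "'a::comm_semiring_1^'m \<Rightarrow> 'a^'n \<Rightarrow> 'a^'n^'m" where
  "outer a b = (\<chi> i j. a$i * b$j)"

lemma outer_mult_vec: "outer a b *v x = (b \<bullet> x) *\<^sub>R (a :: real^'m)"
  by (simp add: outer_def matrix_vector_mult_def inner_vec_def vec_eq_iff sum_distrib_left
      algebra_simps)

lemma transpose_outer: "transpose (outer a b) = outer b a"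
  by (simp add: outer_def transpose_def vec_eq_iff mult.commute)

lemma trace_outer: "trace (outer a b) = a \<bullet> (b :: real^'n)"
  by (simp add: outer_def trace_def inner_vec_def)

lemma transpose_add: "transpose (A + B) = transpose A + transpose B"
  by (simp add: transpose_def vec_eq_iff)

lemma mem_Zset_iff: "(\<rho>, v, m, \<sigma>, p) \<in> Zset \<longleftrightarrow> transpose \<sigma> = \<sigma> \<and> trace \<sigma> = 0"
  by (simp add: Zset_def trace_def)

lemma subspace_Zset: "subspace Zset"
  unfolding subspace_def Zset_def
  by (auto simp: zero_prod_def transpose_def vec_eq_iff sum.distrib sum_distrib_left[symmetric])

lemma ker_M_iff:
  "(x, t) \<in> ker_M (\<rho>, v, m, \<sigma>, p) \<longleftrightarrow>
     (\<sigma> + p *\<^sub>R mat 1) *v x + t *\<^sub>R v = 0 \<and> v \<bullet> x = 0 \<and> m \<bullet> x + \<rho> * t = 0"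
  by (simp add: ker_M_def M_Lambda_def zero_prod_def)

lemma wave_cone'I:
  assumes "z \<in> Zset" "(fst z, fst (snd z)) \<noteq> 0" "(x, t) \<in> ker_M z" "t \<noteq> 0"
  shows "z \<in> wave_cone'"
  using assms by (auto simp: wave_cone'_def wave_cone_def zero_prod_def)

lemma ker_M_perturbation:
  assumes ker: "(x, 0) \<in> ker_M (\<rho>, v, m, \<sigma>, p)" and "x \<noteq> 0"
  defines "S \<equiv> - (1 / (x \<bullet> x)) *\<^sub>R (outer v x + outer x v)"
  shows "(x, e) \<in> ker_M ((\<rho>, v, m, \<sigma>, p) + e *\<^sub>R (0, 0, - (\<rho> / (x \<bullet> x)) *\<^sub>R x, S, 0))"
proof -
  from ker have \<sigma>x: "(\<sigma> + p *\<^sub>R mat 1) *v x = 0" and vx: "v \<bullet> x = 0" and mx: "m \<bullet> x = 0"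
    by (simp_all add: ker_M_iff)
  have xx: "x \<bullet> x \<noteq> 0" using \<open>x \<noteq> 0\<close> by simp
  have "S *v x = - (1 / (x \<bullet> x)) *\<^sub>R ((outer v x + outer x v) *v x)"
    by (simp only: S_def scaleR_matrix_vector_assoc)
  also have "\<dots> = - v"
    using xx vx by (simp add: matrix_vector_mult_add_rdistrib outer_mult_vec inner_commute)
  finally have "S *v x = - v" .
  have "(\<sigma> + e *\<^sub>R S + p *\<^sub>R mat 1) *v x = (\<sigma> + p *\<^sub>R mat 1) *v x + e *\<^sub>R (S *v x)"
    by (simp add: algebra_simps scaleR_matrix_vector_assoc)
  also have "\<dots> = - e *\<^sub>R v" using \<sigma>x \<open>S *v x = - v\<close> by simp
  finally show ?thesis
    using vx mx xx by (simp add: ker_M_iff algebra_simps)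
qed

lemma mem_closure_punctured_line:
  fixes z d :: "'a::real_normed_vector"
  assumes "\<And>e. e \<noteq> 0 \<Longrightarrow> z + e *\<^sub>R d \<in> A"
  shows "z \<in> closure A"
proof -
  define s where "s k = z + (1 / real (Suc k)) *\<^sub>R d" for k
  have "s \<longlonglongrightarrow> z + 0 *\<^sub>R d"
    unfolding s_def by (intro tendsto_intros LIMSEQ_Suc[OF lim_1_over_n])
  moreover have "s k \<in> A" for k
    unfolding s_def by (rule assms) simp
  ultimately show ?thesis
    unfolding closure_sequential by auto
qed

theorem lemma3p1:
  assumes "CARD('n::finite) \<ge> 2"
  shows "(wave_cone :: 'n Zamb set) \<subseteq> closure (wave_cone' :: 'n Zamb set)"
proof
  fix z :: "'n Zamb"
  assume zW: "z \<in> wave_cone"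
  obtain \<rho> v m \<sigma> p where z: "z = (\<rho>, v, m, \<sigma>, p)" by (cases z) auto
  from zW have Z: "z \<in> Zset" and rv: "(\<rho>, v) \<noteq> 0" and "ker_M z \<noteq> {0}"
    by (auto simp: wave_cone_def z)
  moreover have "0 \<in> ker_M z" by (simp add: ker_M_def M_Lambda_def zero_prod_def z)
  ultimately obtain x t where xt: "(x, t) \<in> ker_M z" "(x, t) \<noteq> 0" by auto
  show "z \<in> closure wave_cone'"
  proof (cases "t = 0")
    case False
    with Z rv xt have "z \<in> wave_cone'" by (intro wave_cone'I) (simp_all add: z)
    then show ?thesis by (rule closure_subset[THEN subsetD])
  next
    case True
    with xt have "x \<noteq> 0" by (simp add: zero_prod_def)
    define d :: "'n Zamb" where
      "d = (- 1 / (x \<bullet> x)) *\<^sub>R (0, 0, \<rho> *\<^sub>R x, outer v x + outer x v, 0)"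
    have "v \<bullet> x = 0" using xt True by (simp add: ker_M_iff z)
    then have "(0, 0, \<rho> *\<^sub>R x, outer v x + outer x v, 0) \<in> Zset"
      by (simp add: mem_Zset_iff transpose_add transpose_outer trace_add trace_outer inner_commute)
    then have "d \<in> Zset"
      unfolding d_def by (rule subspace_scale[OF subspace_Zset])
    then have "z + e *\<^sub>R d \<in> Zset" for e
      using subspace_Zset Z by (intro subspace_add subspace_scale)
    moreover have "(x, e) \<in> ker_M (z + e *\<^sub>R d)" for e
      using ker_M_perturbation xt True \<open>x \<noteq> 0\<close> by (simp add: z d_def)
    ultimately have "z + e *\<^sub>R d \<in> wave_cone'" if "e \<noteq> 0" for e
      using rv that by (intro wave_cone'I) (auto simp: z d_def)
    then show ?thesis by (rule mem_closure_punctured_line)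
  qed
qed

end
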